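(* Let $\mathcal{F}$ be a finite set of graphs. For every integer $T>0$ and real $\lambda>0$: (i) with $r=\sqrt{(T+1)n}$ and $n\ge r^2/\lambda^2$, $\mathsf{VC}\text{-}\mathsf{dim}\big(\mathbb{H}_{r,\lambda}(\mathcal{E}_{\mathsf{WLOA},\mathcal{F}}(n,d_T))\big)\in\Theta(r^2/\lambda^2)$; (ii) with $r=\sqrt{T/(T+1)}$ and $n\ge r^2/\lambda^2$, $\mathsf{VC}\text{-}\mathsf{dim}\big(\mathbb{H}_{1,\lambda}(\overline{\mathcal{E}}_{\mathsf{WLOA},\mathcal{F}}(n,d_T))\big)\in\Theta(1/\lambda^2)$.
   Context: $\mathcal{G}_n$ is the set of (unlabeled, simple, undirected) graphs on $n$ vertices. $1$-WL$_{\mathcal{F}}$ colouring: $C^{1,\mathcal{F}}_0(v)=(\ell_F(v))_{F\in\mathcal{F}}$ with $\ell_F(v)=1$ if $v$ lies in some $X\subseteq V(G)$ with $G[X]$ isomorphic to $F$, else $0$; $C^{1,\mathcal{F}}_t(v)=\mathsf{RELABEL}(C^{1,\mathcal{F}}_{t-1}(v),\{\!\{C^{1,\mathcal{F}}_{t-1}(u):u\in N(v)\}\!\})$ with a fixed injective $\mathsf{RELABEL}$ shared by all graphs; $\Sigma_t$ is the set of round-$t$ colours over $\mathcal{G}_n$, and $\phi_{\mathcal{F},t}(G)_c$ the number of vertices of $G$ with colour $c$ at round $t$. $\phi^{(T)}_{\mathsf{WLOA},\mathcal{F}}(G)\in\{0,1\}^{d_T}$ has a coordinate for each $(t,c,j)$,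 $t\in\{0,\dots,T\}$, $c\in\Sigma_t$, $j\in\{1,\dots,n\}$, equal to $1$ iff $\phi_{\mathcal{F},t}(G)_c\ge j$; $\overline{\phi^{(T)}_{\mathsf{WLOA},\mathcal{F}}}$ is its unit-norm normalisation; $\mathcal{E}_{\mathsf{WLOA},\mathcal{F}}(n,d_T)=\{\phi^{(T)}_{\mathsf{WLOA},\mathcal{F}}\}$, $\overline{\mathcal{E}}_{\mathsf{WLOA},\mathcal{F}}(n,d_T)=\{\overline{\phi^{(T)}_{\mathsf{WLOA},\mathcal{F}}}\}$. A sample is $(r,\lambda)$-separable if its points lie in a ball of radius $r$ and the distance between the convex hulls of the two classes is at least $2\lambda$. $\mathbb{H}_{r,\lambda}(\mathcal{E})$: partial concepts $h:\mathcal{G}_n\to\{0,1,\star\}$ such that every finite list of graphs with $h\ne\star$, labelled by $h$ and embedded by some $\mathrm{emb}\in\mathcal{E}$, is $(r,\lambda)$-separable. VC dimension: largest size of a shattered set. *)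

theory Defs
  imports "HOL-Analysis.Analysis" "HOL-Library.Multiset"
begin

definition graphs :: "nat \<Rightarrow> (nat \<times> nat) set set" where
  "graphs n = {E. E \<subseteq> {0..<n} \<times> {0..<n} \<and> sym E \<and> irrefl E}"

definition graph_iso :: "nat \<Rightarrow> (nat \<times> nat) set \<Rightarrow> (nat \<times> nat) set \<Rightarrow> bool" where
  "graph_iso n E1 E2 \<longleftrightarrow> (\<exists>f. bij_betw f {0..<n} {0..<n} \<and>
      (\<forall>a<n. \<forall>b<n. (a, b) \<in> E1 \<longleftrightarrow> (f a, f b) \<in> E2))"

definition iso_rel :: "nat \<Rightarrow> ((nat \<times> nat) set \<times> (nat \<times> nat) set) set" where
  "iso_rel n = {(E1, E2). E1 \<in> graphs n \<and> E2 \<in> graphs n \<and> graph_iso n E1 E2}"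

definition Gn :: "nat \<Rightarrow> (nat \<times> nat) set set set" where
  "Gn n = graphs n // iso_rel n"

text \<open>A pattern graph F is a pair (k, EF) with EF a graph on {0..<k}.
  l_F(v) = 1 iff v lies in some X \<subseteq> V(G) with G[X] isomorphic to F.\<close>
definition occurs :: "nat \<Rightarrow> (nat \<times> nat) set \<Rightarrow> nat \<times> (nat \<times> nat) set \<Rightarrow> nat \<Rightarrow> bool" where
  "occurs n E F v \<longleftrightarrow> (\<exists>X f. X \<subseteq> {0..<n} \<and> v \<in> X \<and> bij_betw f {0..<fst F} X \<and>
      (\<forall>a<fst F. \<forall>b<fst F. (a, b) \<in> snd F \<longleftrightarrow> (f a, f b) \<in> E))"

text \<open>Colours: the injective RELABEL shared by all graphs is realised canonically by
  the free datatype constructors (initial colour = the indicator vector (l_F(v))_F,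
  represented by its support; later colours = pair of previous colour and multiset
  of neighbour colours).\<close>
datatype wlcol = Col0 "(nat \<times> (nat \<times> nat) set) set" | ColS wlcol "wlcol multiset"

primrec wl :: "(nat \<times> (nat \<times> nat) set) set \<Rightarrow> nat \<Rightarrow> (nat \<times> nat) set \<Rightarrow> nat \<Rightarrow> nat \<Rightarrow> wlcol" where
  "wl Fs n E 0 v = Col0 {F \<in> Fs. occurs n E F v}"
| "wl Fs n E (Suc t) v = ColS (wl Fs n E t v) (image_mset (wl Fs n E t) (mset_set {u. (v, u) \<in> E}))"

definition Sigma :: "(nat \<times> (nat \<times> nat) set) set \<Rightarrow> nat \<Rightarrow> nat \<Rightarrow> wlcol set" where
  "Sigma Fs n t = {wl Fs n E t v | E v. E \<in> graphs n \<and> v < n}"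

definition colcount :: "(nat \<times> (nat \<times> nat) set) set \<Rightarrow> nat \<Rightarrow> (nat \<times> nat) set \<Rightarrow> nat \<Rightarrow> wlcol \<Rightarrow> nat" where
  "colcount Fs n E t c = card {v. v < n \<and> wl Fs n E t v = c}"

text \<open>Coordinate set of R^{d_T}: triples (t, c, j).\<close>
definition coords :: "(nat \<times> (nat \<times> nat) set) set \<Rightarrow> nat \<Rightarrow> nat \<Rightarrow> (nat \<times> wlcol \<times> nat) set" where
  "coords Fs n T = {(t, c, j). t \<le> T \<and> c \<in> Sigma Fs n t \<and> 1 \<le> j \<and> j \<le> n}"

definition phi_lab :: "(nat \<times> (nat \<times> nat) set) set \<Rightarrow> nat \<Rightarrow> nat \<Rightarrow> (nat \<times> nat) set \<Rightarrow> nat \<times> wlcol \<times> nat \<Rightarrow> real" where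
  "phi_lab Fs n T E = (\<lambda>(t, c, j). if (t, c, j) \<in> coords Fs n T \<and> j \<le> colcount Fs n E t c then 1 else 0)"

definition phi_WLOA :: "(nat \<times> (nat \<times> nat) set) set \<Rightarrow> nat \<Rightarrow> nat \<Rightarrow> (nat \<times> nat) set set \<Rightarrow> nat \<times> wlcol \<times> nat \<Rightarrow> real" where
  "phi_WLOA Fs n T X = phi_lab Fs n T (SOME E. E \<in> X)"

definition enorm :: "'i set \<Rightarrow> ('i \<Rightarrow> real) \<Rightarrow> real" where
  "enorm I x = sqrt (\<Sum>i\<in>I. (x i)\<^sup>2)"

definition phi_WLOA_norm :: "(nat \<times> (nat \<times> nat) set) set \<Rightarrow> nat \<Rightarrow> nat \<Rightarrow> (nat \<times> nat) set set \<Rightarrow> nat \<times> wlcol \<times> nat \<Rightarrow> real" where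
  "phi_WLOA_norm Fs n T X = (\<lambda>i. phi_WLOA Fs n T X i / enorm (coords Fs n T) (phi_WLOA Fs n T X))"

definition E_WLOA where "E_WLOA Fs n T = {phi_WLOA Fs n T}"
definition E_WLOA_norm where "E_WLOA_norm Fs n T = {phi_WLOA_norm Fs n T}"

definition conv_fin :: "('i \<Rightarrow> real) set \<Rightarrow> ('i \<Rightarrow> real) set" where
  "conv_fin P = {y. \<exists>a. (\<forall>p\<in>P. 0 \<le> a p) \<and> (\<Sum>p\<in>P. a p) = 1 \<and> y = (\<lambda>i. \<Sum>p\<in>P. a p * p i)}"

text \<open>(r,lambda)-separable sample: all points in the (origin-centred, closed) ball of radius r
  and distance between the convex hulls of the two classes at least 2 lambda
  (i.e. every pair of points of the two hulls is at distance at least 2 lambda).\<close>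
definition separable :: "'i set \<Rightarrow> real \<Rightarrow> real \<Rightarrow> (('i \<Rightarrow> real) \<times> bool) list \<Rightarrow> bool" where
  "separable I r lam S \<longleftrightarrow>
     (\<forall>(x, y)\<in>set S. enorm I x \<le> r) \<and>
     (\<forall>p\<in>conv_fin {x. (x, True) \<in> set S}. \<forall>q\<in>conv_fin {x. (x, False) \<in> set S}.
         2 * lam \<le> enorm I (\<lambda>i. p i - q i))"

text \<open>Partial concepts D -> {0,1,*}: None = *, Some False = 0, Some True = 1.\<close>
definition Hmargin :: "'a set \<Rightarrow> 'i set \<Rightarrow> real \<Rightarrow> real \<Rightarrow> ('a \<Rightarrow> 'i \<Rightarrow> real) set \<Rightarrow> ('a \<Rightarrow> bool option) set" where
  "Hmargin D I r lam Emb = {h. (\<forall>x. x \<notin> D \<longrightarrow> h x = None) \<and>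
      (\<forall>xs. set xs \<subseteq> D \<and> (\<forall>x\<in>set xs. h x \<noteq> None) \<longrightarrow>
         (\<exists>emb\<in>Emb. separable I r lam (map (\<lambda>x. (emb x, the (h x))) xs)))}"

definition shatters :: "('a \<Rightarrow> bool option) set \<Rightarrow> 'a set \<Rightarrow> bool" where
  "shatters H S \<longleftrightarrow> (\<forall>f. \<exists>h\<in>H. \<forall>x\<in>S. h x = Some (f x))"

definition vcdim :: "'a set \<Rightarrow> ('a \<Rightarrow> bool option) set \<Rightarrow> nat" where
  "vcdim D H = Max {card S | S. S \<subseteq> D \<and> shatters H S}"

end

theory Submission
  imports Defs
begin

(* Upper bound: split a shattered set into m pairs and label each pair with opposite
   labels. Choosing the orientations greedily, so that each new term has a nonpositive
   cross term with the partial sum, keeps the squared norm of the signed sum of the m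
   pair differences below the sum of their squared norms, at most 4 m r^2. The class
   means therefore differ by at most 2 r / sqrt m, and the margin forces m <= r^2 / lam^2.

   Lower bound: use the classes of the graphs "clique on m + 1 vertices plus isolated
   vertices", n - d <= m < n. From round 1 on, the WL colour of a vertex determines its
   degree, so on the coordinates of rounds t >= 1 whose colour has nonzero degree the
   feature vectors of these d graphs have disjoint supports, each of squared norm
   T (m + 1) >= T n / 2. Two disjoint convex hulls are then at squared distance at least
   (T n / 2) (1 / |A| + 1 / |B|) >= 2 T n / d, while every feature vector has squared norm
   (T + 1) n. Choosing d of order r^2 / lam^2 (resp. 1 / lam^2 after normalisation)
   gives the matching lower bound. *)

section \<open>Margin classes of a single embedding\<close>

lemma enorm_nonneg: "0 \<le> enorm I x"
  by (simp add: enorm_def sum_nonneg)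

lemma enorm_le_iff: "0 \<le> r \<Longrightarrow> enorm I x \<le> r \<longleftrightarrow> (\<Sum>i\<in>I. (x i)\<^sup>2) \<le> r\<^sup>2"
  unfolding enorm_def by (simp add: real_sqrt_le_iff' sum_nonneg)

lemma le_enorm_iff: "0 \<le> l \<Longrightarrow> l \<le> enorm I x \<longleftrightarrow> l\<^sup>2 \<le> (\<Sum>i\<in>I. (x i)\<^sup>2)"
  unfolding enorm_def
  by (metis real_le_rsqrt real_sqrt_le_iff real_sqrt_pow2_iff real_sqrt_power sum_nonneg zero_le_power2)

lemma average_in_conv_fin:
  assumes "finite K" "K \<noteq> {}"
  shows "(\<lambda>i. (\<Sum>k\<in>K. e k i) / real (card K)) \<in> conv_fin (e ` K)"
proof -
  define a where "a p = real (card {k\<in>K. e k = p}) / real (card K)" for p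
  have weighted: "(\<Sum>p\<in>e ` K. a p * g p) = (\<Sum>k\<in>K. g (e k)) / real (card K)" for g :: "_ \<Rightarrow> real"
  proof -
    have "(\<Sum>k\<in>K. g (e k) / real (card K))
        = (\<Sum>p\<in>e ` K. \<Sum>k\<in>{k\<in>K. e k = p}. g (e k) / real (card K))"
      by (rule sum.image_gen[OF assms(1)])
    also have "\<dots> = (\<Sum>p\<in>e ` K. a p * g p)"
      by (rule sum.cong) (auto simp: a_def)
    finally show ?thesis by (simp add: sum_divide_distrib)
  qed
  have "(\<Sum>p\<in>e ` K. a p) = 1"
    using weighted[of "\<lambda>_. 1"] assms by simp
  then show ?thesis
    unfolding conv_fin_def using weighted[of "\<lambda>p. p _"]
    by (intro CollectI exI[of _ a]) (auto simp: a_def)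
qed

lemma conv_fin_image_inj:
  assumes "inj_on e A" "p \<in> conv_fin (e ` A)"
  obtains a where "\<forall>x\<in>A. 0 \<le> a x" "sum a A = 1" "p = (\<lambda>i. \<Sum>x\<in>A. a x * e x i)"
proof -
  obtain a where "\<forall>v\<in>e ` A. 0 \<le> a v" "(\<Sum>v\<in>e ` A. a v) = 1" "p = (\<lambda>i. \<Sum>v\<in>e ` A. a v * v i)"
    using assms(2) unfolding conv_fin_def by blast
  then show thesis
    using that[of "a \<circ> e"] by (simp add: sum.reindex[OF assms(1)])
qed

lemma Hmargin_nowhere_defined: "Emb \<noteq> {} \<Longrightarrow> (\<lambda>_. None) \<in> Hmargin D I r lam Emb"
  by (auto simp: Hmargin_def separable_def conv_fin_def)

lemma card_le_vcdim:
  assumes "finite D" "S \<subseteq> D" "shatters H S"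
  shows "card S \<le> vcdim D H"
  unfolding vcdim_def using assms
  by (intro Max_ge) (auto intro: finite_subset[of _ "card ` Pow D"])

lemma vcdim_attained:
  assumes "finite D" "H \<noteq> {}"
  obtains S where "S \<subseteq> D" "shatters H S" "vcdim D H = card S"
proof -
  have "shatters H {}" using assms(2) by (auto simp: shatters_def)
  then have "vcdim D H \<in> {card S | S. S \<subseteq> D \<and> shatters H S}"
    unfolding vcdim_def using assms(1)
    by (intro Max_in) (auto intro: finite_subset[of _ "card ` Pow D"])
  then show thesis using that by blast
qed

lemma separable_if_shatters_Hmargin:
  assumes "shatters (Hmargin D I r lam {emb}) S" "S \<subseteq> D" "set xs \<subseteq> S"
  shows "separable I r lam (map (\<lambda>x. (emb x, f x)) xs)"
proof -
  obtain h where h: "h \<in> Hmargin D I r lam {emb}" "\<forall>x\<in>S. h x = Some (f x)"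
    using assms(1) unfolding shatters_def by blast
  moreover have "set xs \<subseteq> D" "\<forall>x\<in>set xs. h x \<noteq> None"
    using h(2) assms(2,3) by auto
  ultimately have "separable I r lam (map (\<lambda>x. (emb x, the (h x))) xs)"
    unfolding Hmargin_def by blast
  moreover have "map (\<lambda>x. (emb x, the (h x))) xs = map (\<lambda>x. (emb x, f x)) xs"
    using h(2) assms(3) by auto
  ultimately show ?thesis by simp
qed

lemma shatters_Hmargin_if_margin:
  assumes "S \<subseteq> D" "lam > 0"
    and radius: "\<And>x. x \<in> S \<Longrightarrow> enorm I (emb x) \<le> r"
    and margin: "\<And>A B a b. A \<subseteq> S \<Longrightarrow> B \<subseteq> S \<Longrightarrow> A \<inter> B = {} \<Longrightarrow>
      \<forall>x\<in>A. 0 \<le> a x \<Longrightarrow> sum a A = 1 \<Longrightarrow> \<forall>x\<in>B. 0 \<le> b x \<Longrightarrow> sum b B = 1 \<Longrightarrow>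
      2 * lam \<le> enorm I (\<lambda>i. (\<Sum>x\<in>A. a x * emb x i) - (\<Sum>x\<in>B. b x * emb x i))"
  shows "shatters (Hmargin D I r lam {emb}) S"
  unfolding shatters_def
proof
  fix f :: "'a \<Rightarrow> bool"
  have inj: "inj_on emb S"
  proof (rule inj_onI, rule ccontr)
    fix x y assume xy: "x \<in> S" "y \<in> S" "emb x = emb y" "x \<noteq> y"
    then have "2 * lam \<le> enorm I (\<lambda>i. emb x i - emb y i)"
      using margin[of "{x}" "{y}" "\<lambda>_. 1" "\<lambda>_. 1"] by simp
    then show False using xy(3) \<open>lam > 0\<close> by (simp add: enorm_def)
  qed
  define h where "h x = (if x \<in> S then Some (f x) else None)" for x
  have "separable I r lam (map (\<lambda>x. (emb x, the (h x))) xs)"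
    if xs: "set xs \<subseteq> S" for xs
  proof -
    define A where "A = {x\<in>set xs. f x}"
    define B where "B = {x\<in>set xs. \<not> f x}"
    have AB: "A \<subseteq> S" "B \<subseteq> S" "A \<inter> B = {}" using xs by (auto simp: A_def B_def)
    have "{v. (v, True) \<in> set (map (\<lambda>x. (emb x, the (h x))) xs)} = emb ` A"
      "{v. (v, False) \<in> set (map (\<lambda>x. (emb x, the (h x))) xs)} = emb ` B"
      using xs by (auto simp: A_def B_def h_def subset_iff)
    moreover have "2 * lam \<le> enorm I (\<lambda>i. p i - q i)"
      if p: "p \<in> conv_fin (emb ` A)" and q: "q \<in> conv_fin (emb ` B)" for p q
    proof -
      obtain a where "\<forall>x\<in>A. 0 \<le> a x" "sum a A = 1" "p = (\<lambda>i. \<Sum>x\<in>A. a x * emb x i)"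
        by (rule conv_fin_image_inj[OF inj_on_subset[OF inj AB(1)] p])
      moreover obtain b where "\<forall>x\<in>B. 0 \<le> b x" "sum b B = 1" "q = (\<lambda>i. \<Sum>x\<in>B. b x * emb x i)"
        by (rule conv_fin_image_inj[OF inj_on_subset[OF inj AB(2)] q])
      ultimately show ?thesis using margin[OF AB] by simp
    qed
    ultimately show ?thesis
      using xs radius unfolding separable_def by auto
  qed
  then have "h \<in> Hmargin D I r lam {emb}"
    using \<open>S \<subseteq> D\<close> unfolding Hmargin_def by (auto simp: h_def split: if_splits)
  moreover have "\<forall>x\<in>S. h x = Some (f x)"
    by (simp add: h_def)
  ultimately show "\<exists>h\<in>Hmargin D I r lam {emb}. \<forall>x\<in>S. h x = Some (f x)"
    by blast
qed

lemma exists_signs_sum_sq_le: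
  fixes y :: "nat \<Rightarrow> 'i \<Rightarrow> real"
  shows "\<exists>s. (\<Sum>j\<in>I. (\<Sum>i<m. (if s i then 1 else -1) * y i j)\<^sup>2) \<le> (\<Sum>i<m. \<Sum>j\<in>I. (y i j)\<^sup>2)"
proof (induction m)
  case 0
  then show ?case by simp
next
  case (Suc m)
  then obtain s where s: "(\<Sum>j\<in>I. (\<Sum>i<m. (if s i then 1 else -1) * y i j)\<^sup>2)
      \<le> (\<Sum>i<m. \<Sum>j\<in>I. (y i j)\<^sup>2)" by blast
  define S where "S j = (\<Sum>i<m. (if s i then 1 else -1) * y i j)" for j
  define b where "b = ((\<Sum>j\<in>I. S j * y m j) < 0)"
  have "(\<Sum>j\<in>I. (\<Sum>i<Suc m. (if (s(m := b)) i then 1 else -1) * y i j)\<^sup>2)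
      = (\<Sum>j\<in>I. (S j)\<^sup>2) + 2 * (if b then 1 else -1) * (\<Sum>j\<in>I. S j * y m j) + (\<Sum>j\<in>I. (y m j)\<^sup>2)"
    by (cases b) (simp_all add: S_def power2_eq_square algebra_simps sum.distrib sum_distrib_left
        sum_subtractf sum_negf)
  also have "\<dots> \<le> (\<Sum>j\<in>I. (S j)\<^sup>2) + (\<Sum>j\<in>I. (y m j)\<^sup>2)"
    by (cases b) (auto simp: b_def)
  also have "\<dots> \<le> (\<Sum>i<Suc m. \<Sum>j\<in>I. (y i j)\<^sup>2)"
    using s by (simp add: S_def)
  finally show ?case by blast
qed

lemma sum_sq_diff_le:
  fixes x y :: "'i \<Rightarrow> real"
  shows "(\<Sum>j\<in>I. (x j - y j)\<^sup>2) \<le> 2 * (\<Sum>j\<in>I. (x j)\<^sup>2) + 2 * (\<Sum>j\<in>I. (y j)\<^sup>2)"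
proof -
  have "(x j - y j)\<^sup>2 \<le> 2 * (x j)\<^sup>2 + 2 * (y j)\<^sup>2" for j
    using zero_le_power2[of "x j + y j"] by (simp add: power2_eq_square algebra_simps)
  then show ?thesis
    by (simp add: sum_mono sum.distrib[symmetric] sum_distrib_left)
qed

lemma pair_margin_bound:
  fixes u v :: "nat \<Rightarrow> 'i \<Rightarrow> real"
  assumes "m > 0" "lam > 0"
    and radius: "\<And>i. i < m \<Longrightarrow> enorm I (u i) \<le> r" "\<And>i. i < m \<Longrightarrow> enorm I (v i) \<le> r"
    and margin: "\<And>s. 2 * lam \<le> enorm I (\<lambda>j. ((\<Sum>i<m. if s i then u i j else v i j)
                                          - (\<Sum>i<m. if s i then v i j else u i j)) / real m)"
  shows "real m * lam\<^sup>2 \<le> r\<^sup>2"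
proof -
  have "0 \<le> r"
    using radius(1)[OF \<open>m > 0\<close>] enorm_nonneg[of I "u 0"] by linarith
  define y where "y i j = u i j - v i j" for i j
  obtain s where s: "(\<Sum>j\<in>I. (\<Sum>i<m. (if s i then 1 else -1) * y i j)\<^sup>2) \<le> (\<Sum>i<m. \<Sum>j\<in>I. (y i j)\<^sup>2)"
    using exists_signs_sum_sq_le by blast
  have signed: "(\<Sum>i<m. if s i then u i j else v i j) - (\<Sum>i<m. if s i then v i j else u i j)
      = (\<Sum>i<m. (if s i then 1 else -1) * y i j)" for j
    unfolding sum_subtractf[symmetric] by (rule sum.cong) (auto simp: y_def)
  have pair: "(\<Sum>j\<in>I. (y i j)\<^sup>2) \<le> 4 * r\<^sup>2" if "i < m" for i
    using sum_sq_diff_le[of "u i" "v i" I] radius[OF that] \<open>0 \<le> r\<close>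
    unfolding y_def enorm_le_iff[OF \<open>0 \<le> r\<close>] by linarith
  have "(2 * lam)\<^sup>2 \<le> (\<Sum>j\<in>I. ((\<Sum>i<m. (if s i then 1 else -1) * y i j) / real m)\<^sup>2)"
    using margin[of s] \<open>lam > 0\<close> unfolding signed by (simp add: le_enorm_iff)
  also have "\<dots> = (\<Sum>j\<in>I. (\<Sum>i<m. (if s i then 1 else -1) * y i j)\<^sup>2) / (real m)\<^sup>2"
    unfolding power_divide by (rule sum_divide_distrib[symmetric])
  also have "\<dots> \<le> (\<Sum>i<m. \<Sum>j\<in>I. (y i j)\<^sup>2) / (real m)\<^sup>2"
    using s by (simp add: divide_right_mono)
  also have "\<dots> \<le> (\<Sum>i<m. 4 * r\<^sup>2) / (real m)\<^sup>2"
    using pair by (intro divide_right_mono sum_mono) auto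
  also have "\<dots> = 4 * r\<^sup>2 / real m"
    using \<open>m > 0\<close> by (simp add: power2_eq_square)
  finally show ?thesis
    using \<open>m > 0\<close> by (simp add: field_simps power_mult_distrib)
qed

lemma shattered_Hmargin_pairs_margin:
  fixes emb :: "'a \<Rightarrow> 'i \<Rightarrow> real" and g :: "nat \<Rightarrow> 'a"
  assumes shatters: "shatters (Hmargin D I r lam {emb}) S" and "S \<subseteq> D"
    and inj: "inj_on g {..<2 * m}" and gS: "g ` {..<2 * m} \<subseteq> S" and "0 < m"
  shows "2 * lam \<le> enorm I (\<lambda>j. ((\<Sum>i<m. if s i then emb (g i) j else emb (g (m + i)) j)
                                - (\<Sum>i<m. if s i then emb (g (m + i)) j else emb (g i) j)) / real m)"
proof -
  define idx where "idx i = (if s i then i else m + i)" for i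
  define idx' where "idx' i = (if s i then m + i else i)" for i
  define P where "P = g ` idx ` {..<m}"
  define Q where "Q = g ` idx' ` {..<m}"
  have idx_range: "idx ` {..<m} \<subseteq> {..<2 * m}" "idx' ` {..<m} \<subseteq> {..<2 * m}"
    and idx_disjoint: "idx ` {..<m} \<inter> idx' ` {..<m} = {}"
    unfolding idx_def idx'_def by (auto split: if_split_asm)
  have "P \<inter> Q = {}"
    unfolding P_def Q_def inj_on_image_Int[OF inj idx_range, symmetric] idx_disjoint by simp
  have "P \<union> Q \<subseteq> S"
    using idx_range gS unfolding P_def Q_def by blast
  define xs where "xs = map g (map idx [0..<m] @ map idx' [0..<m])"
  have "set xs = P \<union> Q"
    by (simp add: xs_def P_def Q_def atLeast0LessThan image_image)
  then have "separable I r lam (map (\<lambda>x. (emb x, x \<in> P)) xs)"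
    using separable_if_shatters_Hmargin[OF shatters \<open>S \<subseteq> D\<close>] \<open>P \<union> Q \<subseteq> S\<close> by simp
  moreover have "{x. (x, True) \<in> set (map (\<lambda>x. (emb x, x \<in> P)) xs)} = emb ` P"
    "{x. (x, False) \<in> set (map (\<lambda>x. (emb x, x \<in> P)) xs)} = emb ` Q"
    using \<open>set xs = P \<union> Q\<close> \<open>P \<inter> Q = {}\<close> by auto
  ultimately have hulls: "\<forall>p\<in>conv_fin (emb ` P). \<forall>q\<in>conv_fin (emb ` Q). 2 * lam \<le> enorm I (\<lambda>i. p i - q i)"
    unfolding separable_def by simp
  have "{..<m} \<noteq> {}"
    using \<open>0 < m\<close> by auto
  then have "(\<lambda>j. (\<Sum>i<m. emb (g (idx i)) j) / real m) \<in> conv_fin (emb ` P)"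
    "(\<lambda>j. (\<Sum>i<m. emb (g (idx' i)) j) / real m) \<in> conv_fin (emb ` Q)"
    using average_in_conv_fin[of "{..<m}" "\<lambda>i. emb (g (idx i))"]
      average_in_conv_fin[of "{..<m}" "\<lambda>i. emb (g (idx' i))"]
    by (simp_all add: P_def Q_def image_image)
  from hulls[rule_format, OF this]
  have "2 * lam \<le> enorm I (\<lambda>j. ((\<Sum>i<m. emb (g (idx i)) j) - (\<Sum>i<m. emb (g (idx' i)) j)) / real m)"
    by (simp add: diff_divide_distrib)
  moreover have "(\<Sum>i<m. if s i then emb (g i) j else emb (g (m + i)) j) = (\<Sum>i<m. emb (g (idx i)) j)"
    "(\<Sum>i<m. if s i then emb (g (m + i)) j else emb (g i) j) = (\<Sum>i<m. emb (g (idx' i)) j)" for j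
    by (auto simp: idx_def idx'_def intro!: sum.cong)
  ultimately show ?thesis
    by simp
qed

lemma card_shattered_Hmargin_le:
  fixes emb :: "'a \<Rightarrow> 'i \<Rightarrow> real"
  assumes shatters: "shatters (Hmargin D I r lam {emb}) S"
    and "S \<subseteq> D" "finite S" "lam > 0"
  shows "real (card S) \<le> 2 * r\<^sup>2 / lam\<^sup>2 + 1"
proof -
  define m where "m = card S div 2"
  have "real m * lam\<^sup>2 \<le> r\<^sup>2"
  proof (cases "m = 0")
    case True
    then show ?thesis by simp
  next
    case False
    obtain g where g: "bij_betw g {0..<card S} S"
      using ex_bij_betw_nat_finite[OF \<open>finite S\<close>] by blast
    have inj: "inj_on g {..<2 * m}" and gS: "g ` {..<2 * m} \<subseteq> S"
      using g unfolding m_def bij_betw_def by (auto intro: inj_on_subset)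
    have radius: "enorm I (emb x) \<le> r" if "x \<in> S" for x
      using separable_if_shatters_Hmargin[OF shatters \<open>S \<subseteq> D\<close>, of "[x]"] that
      by (simp add: separable_def)
    show ?thesis
    proof (rule pair_margin_bound[where u = "\<lambda>i. emb (g i)" and v = "\<lambda>i. emb (g (m + i))"])
      show "m > 0" "lam > 0"
        using \<open>m \<noteq> 0\<close> \<open>lam > 0\<close> by simp_all
      show "\<And>i. i < m \<Longrightarrow> enorm I (emb (g i)) \<le> r" "\<And>i. i < m \<Longrightarrow> enorm I (emb (g (m + i))) \<le> r"
        using gS by (auto intro!: radius simp: image_subset_iff)
      show "2 * lam \<le> enorm I (\<lambda>j. ((\<Sum>i<m. if s i then emb (g i) j else emb (g (m + i)) j)
                              - (\<Sum>i<m. if s i then emb (g (m + i)) j else emb (g i) j)) / real m)" for s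
        using shattered_Hmargin_pairs_margin[OF shatters \<open>S \<subseteq> D\<close> inj gS] \<open>m \<noteq> 0\<close> by simp
    qed
  qed
  moreover have "real (card S) * lam\<^sup>2 \<le> (2 * real m + 1) * lam\<^sup>2"
    unfolding m_def by (intro mult_right_mono) (linarith, simp)
  ultimately show ?thesis
    using \<open>lam > 0\<close> by (simp add: field_simps)
qed

lemma vcdim_Hmargin_le:
  fixes emb :: "'a \<Rightarrow> 'i \<Rightarrow> real"
  assumes "finite D" "lam > 0"
  shows "real (vcdim D (Hmargin D I r lam {emb})) \<le> 2 * r\<^sup>2 / lam\<^sup>2 + 1"
proof -
  have "Hmargin D I r lam {emb} \<noteq> {}"
    using Hmargin_nowhere_defined[of "{emb}"] by blast
  then obtain S where "S \<subseteq> D" "shatters (Hmargin D I r lam {emb}) S"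
    "vcdim D (Hmargin D I r lam {emb}) = card S"
    by (rule vcdim_attained[OF \<open>finite D\<close>])
  then show ?thesis
    using card_shattered_Hmargin_le[of D I r lam emb S] finite_subset[of S D] assms by simp
qed

section \<open>Convex hulls of orthogonal families\<close>

lemma sum_sq_orthogonal_combination:
  fixes c :: "'k \<Rightarrow> real" and e :: "'k \<Rightarrow> 'i \<Rightarrow> real"
  assumes "finite K"
    and orth: "\<And>k l i. k \<in> K \<Longrightarrow> l \<in> K \<Longrightarrow> k \<noteq> l \<Longrightarrow> i \<in> J \<Longrightarrow> e k i * e l i = 0"
  shows "(\<Sum>i\<in>J. (\<Sum>k\<in>K. c k * e k i)\<^sup>2) = (\<Sum>k\<in>K. (c k)\<^sup>2 * (\<Sum>i\<in>J. (e k i)\<^sup>2))"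
proof -
  have "(\<Sum>k\<in>K. c k * e k i)\<^sup>2 = (\<Sum>k\<in>K. (c k)\<^sup>2 * (e k i)\<^sup>2)" if "i \<in> J" for i
  proof -
    have "(\<Sum>k\<in>K. c k * e k i)\<^sup>2 = (\<Sum>k\<in>K. \<Sum>l\<in>K. c k * c l * (e k i * e l i))"
      by (simp add: power2_eq_square sum_product algebra_simps)
    also have "\<dots> = (\<Sum>k\<in>K. \<Sum>l\<in>K. if l = k then (c k)\<^sup>2 * (e k i)\<^sup>2 else 0)"
      using orth[OF _ _ _ that] by (intro sum.cong refl) (auto simp: power2_eq_square)
    also have "\<dots> = (\<Sum>k\<in>K. (c k)\<^sup>2 * (e k i)\<^sup>2)"
      using \<open>finite K\<close> by simp
    finally show ?thesis .
  qed
  then have "(\<Sum>i\<in>J. (\<Sum>k\<in>K. c k * e k i)\<^sup>2) = (\<Sum>i\<in>J. \<Sum>k\<in>K. (c k)\<^sup>2 * (e k i)\<^sup>2)"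
    by simp
  also have "\<dots> = (\<Sum>k\<in>K. (c k)\<^sup>2 * (\<Sum>i\<in>J. (e k i)\<^sup>2))"
    by (subst sum.swap) (simp add: sum_distrib_left)
  finally show ?thesis .
qed

lemma inverse_card_le_sum_sq:
  fixes a :: "'x \<Rightarrow> real"
  assumes "finite A" "sum a A = 1"
  shows "1 / real (card A) \<le> (\<Sum>x\<in>A. (a x)\<^sup>2)"
proof -
  have "real (card A) > 0"
    using assms by (auto simp: card_gt_0_iff)
  moreover have "(sum a A)\<^sup>2 \<le> (\<Sum>x\<in>A. (a x)\<^sup>2) * real (card A)"
    by (rule sum_squared_le_sum_of_squares)
  ultimately show ?thesis
    using assms(2) by (simp add: field_simps)
qed

lemma four_div_card_le_sum_sq:
  fixes a b :: "'x \<Rightarrow> real"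
  assumes "finite A" "sum a A = 1" "finite B" "sum b B = 1"
  shows "4 / real (card A + card B) \<le> (\<Sum>x\<in>A. (a x)\<^sup>2) + (\<Sum>x\<in>B. (b x)\<^sup>2)"
proof -
  define p q where "p = real (card A)" and "q = real (card B)"
  have "p > 0" "q > 0"
    using assms by (auto simp: p_def q_def card_gt_0_iff)
  have "4 * (p * q) \<le> (p + q) * (p + q)"
    using zero_le_power2[of "p - q"] by (simp add: power2_eq_square algebra_simps)
  then have "4 / (p + q) \<le> 1 / p + 1 / q"
    using \<open>p > 0\<close> \<open>q > 0\<close> by (simp add: field_simps)
  then show ?thesis
    using inverse_card_le_sum_sq[OF assms(1,2)] inverse_card_le_sum_sq[OF assms(3,4)]
    unfolding p_def q_def by simp
qed

lemma convex_hull_sq_dist_ge_if_orthogonal: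
  fixes e :: "'a \<Rightarrow> 'i \<Rightarrow> real"
  assumes "finite I" "J \<subseteq> I" "finite S" "card S \<le> d" "0 \<le> \<mu>"
    and orth: "\<And>x y i. x \<in> S \<Longrightarrow> y \<in> S \<Longrightarrow> x \<noteq> y \<Longrightarrow> i \<in> J \<Longrightarrow> e x i * e y i = 0"
    and mass: "\<And>x. x \<in> S \<Longrightarrow> \<mu> \<le> (\<Sum>i\<in>J. (e x i)\<^sup>2)"
    and AB: "A \<subseteq> S" "B \<subseteq> S" "A \<inter> B = {}"
    and weights: "\<forall>x\<in>A. 0 \<le> a x" "sum a A = 1" "\<forall>x\<in>B. 0 \<le> b x" "sum b B = 1"
  shows "4 * \<mu> / real d \<le> (\<Sum>i\<in>I. ((\<Sum>x\<in>A. a x * e x i) - (\<Sum>x\<in>B. b x * e x i))\<^sup>2)"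
proof -
  have fin: "finite A" "finite B"
    using AB \<open>finite S\<close> by (auto intro: finite_subset)
  define c where "c x = (if x \<in> A then a x else - b x)" for x
  have on_A: "x \<in> A \<Longrightarrow> c x = a x" and on_B: "x \<in> B \<Longrightarrow> c x = - b x" for x
    using AB(3) by (auto simp: c_def)
  have combination: "(\<Sum>x\<in>A. a x * e x i) - (\<Sum>x\<in>B. b x * e x i) = (\<Sum>x\<in>A \<union> B. c x * e x i)" for i
    using AB(3) fin by (simp add: sum.union_disjoint on_A on_B sum_negf cong: sum.cong)
  have "card A + card B \<le> d"
    using card_Un_disjoint[OF fin AB(3)] card_mono[OF \<open>finite S\<close>, of "A \<union> B"] AB \<open>card S \<le> d\<close> by simp
  moreover have "card A > 0"
    using fin(1) weights(2) by (auto simp: card_gt_0_iff)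
  ultimately have "4 * \<mu> / real d \<le> 4 * \<mu> / real (card A + card B)"
    using \<open>0 \<le> \<mu>\<close> by (intro divide_left_mono) auto
  also have "\<dots> \<le> \<mu> * ((\<Sum>x\<in>A. (a x)\<^sup>2) + (\<Sum>x\<in>B. (b x)\<^sup>2))"
    using mult_left_mono[OF four_div_card_le_sum_sq[OF fin(1) weights(2) fin(2) weights(4)] \<open>0 \<le> \<mu>\<close>]
    by (simp add: mult.commute)
  also have "\<dots> = (\<Sum>x\<in>A \<union> B. (c x)\<^sup>2 * \<mu>)"
    using AB(3) fin by (simp add: sum.union_disjoint on_A on_B sum_distrib_left algebra_simps cong: sum.cong)
  also have "\<dots> \<le> (\<Sum>x\<in>A \<union> B. (c x)\<^sup>2 * (\<Sum>i\<in>J. (e x i)\<^sup>2))"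
    using mass AB by (intro sum_mono mult_left_mono) auto
  also have "\<dots> = (\<Sum>i\<in>J. (\<Sum>x\<in>A \<union> B. c x * e x i)\<^sup>2)"
    using orth AB by (intro sum_sq_orthogonal_combination[symmetric]) (use fin in blast)+
  also have "\<dots> \<le> (\<Sum>i\<in>I. (\<Sum>x\<in>A \<union> B. c x * e x i)\<^sup>2)"
    by (rule sum_mono2[OF \<open>finite I\<close> \<open>J \<subseteq> I\<close>]) simp
  finally show ?thesis
    unfolding combination .
qed

section \<open>WLOA features\<close>

lemma finite_graphs: "finite (graphs n)"
  by (rule finite_subset[of _ "Pow ({0..<n} \<times> {0..<n})"]) (auto simp: graphs_def)

lemma finite_Gn: "finite (Gn n)"
  unfolding Gn_def by (rule finite_quotient[OF finite_graphs]) (auto simp: iso_rel_def)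

lemma graph_iso_refl: "graph_iso n E E"
  unfolding graph_iso_def by (rule exI[of _ id]) auto

lemma Gn_elementD:
  assumes "X \<in> Gn n"
  shows "(SOME E. E \<in> X) \<in> X" "X \<subseteq> graphs n"
proof -
  obtain E where "E \<in> graphs n" "X = iso_rel n `` {E}"
    using assms unfolding Gn_def by (rule quotientE)
  then have "E \<in> X"
    by (simp add: iso_rel_def graph_iso_refl)
  then show "(SOME E. E \<in> X) \<in> X"
    by (rule someI)
  show "X \<subseteq> graphs n"
    using \<open>X = iso_rel n `` {E}\<close> by (auto simp: iso_rel_def)
qed

lemma finite_Sigma: "finite (Sigma Fs n t)"
proof -
  have "Sigma Fs n t = (\<lambda>(E, v). wl Fs n E t v) ` (graphs n \<times> {..<n})"
    by (auto simp: Sigma_def)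
  then show ?thesis
    using finite_graphs by simp
qed

lemma finite_coords: "finite (coords Fs n T)"
proof -
  have "coords Fs n T = (SIGMA t:{..T}. SIGMA c:Sigma Fs n t. {1..n})"
    by (auto simp: coords_def)
  then show ?thesis
    using finite_Sigma by auto
qed

lemma sum_colcount:
  assumes "E \<in> graphs n"
  shows "(\<Sum>c\<in>{c \<in> Sigma Fs n t. P c}. colcount Fs n E t c) = card {v. v < n \<and> P (wl Fs n E t v)}"
proof -
  let ?V = "{v. v < n \<and> P (wl Fs n E t v)}"
  have "card ?V = (\<Sum>c\<in>wl Fs n E t ` ?V. card {v\<in>?V. wl Fs n E t v = c})"
    using sum.image_gen[of ?V "\<lambda>_. 1::nat" "wl Fs n E t"] by simp
  also have "\<dots> = (\<Sum>c\<in>{c \<in> Sigma Fs n t. P c}. card {v\<in>?V. wl Fs n E t v = c})"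
  proof (rule sum.mono_neutral_left)
    show "finite {c \<in> Sigma Fs n t. P c}"
      using finite_Sigma by simp
    show "wl Fs n E t ` ?V \<subseteq> {c \<in> Sigma Fs n t. P c}"
      using assms by (auto simp: Sigma_def)
    show "\<forall>c\<in>{c \<in> Sigma Fs n t. P c} - wl Fs n E t ` ?V. card {v\<in>?V. wl Fs n E t v = c} = 0"
      by auto
  qed
  also have "\<dots> = (\<Sum>c\<in>{c \<in> Sigma Fs n t. P c}. colcount Fs n E t c)"
    by (intro sum.cong refl) (auto simp: colcount_def intro!: arg_cong[where f = card])
  finally show ?thesis ..
qed

lemma sum_sq_phi_lab:
  assumes "E \<in> graphs n"
  shows "(\<Sum>i\<in>{(t, c, j) \<in> coords Fs n T. Q t c}. (phi_lab Fs n T E i)\<^sup>2)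
    = (\<Sum>t\<le>T. real (card {v. v < n \<and> Q t (wl Fs n E t v)}))"
proof -
  have "{(t, c, j) \<in> coords Fs n T. Q t c} = (SIGMA t:{..T}. {c \<in> Sigma Fs n t. Q t c} \<times> {1..n})"
    by (auto simp: coords_def)
  then have "(\<Sum>i\<in>{(t, c, j) \<in> coords Fs n T. Q t c}. (phi_lab Fs n T E i)\<^sup>2)
      = (\<Sum>t\<le>T. \<Sum>(c, j)\<in>{c \<in> Sigma Fs n t. Q t c} \<times> {1..n}. (phi_lab Fs n T E (t, c, j))\<^sup>2)"
    using finite_Sigma by (simp add: sum.Sigma)
  also have "\<dots> = (\<Sum>t\<le>T. \<Sum>c\<in>{c \<in> Sigma Fs n t. Q t c}. \<Sum>j=1..n. if j \<le> colcount Fs n E t c then 1 else 0)"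
  proof (rule sum.cong[OF refl])
    fix t assume "t \<in> {..T}"
    have indicator_sq: "(if P then 1 else 0 :: real)\<^sup>2 = (if P then 1 else 0)" for P
      by simp
    have "(\<Sum>(c, j)\<in>{c \<in> Sigma Fs n t. Q t c} \<times> {1..n}. (phi_lab Fs n T E (t, c, j))\<^sup>2)
      = (\<Sum>c\<in>{c \<in> Sigma Fs n t. Q t c}. \<Sum>j=1..n. (phi_lab Fs n T E (t, c, j))\<^sup>2)"
      by (rule sum.cartesian_product[symmetric])
    also have "\<dots> = (\<Sum>c\<in>{c \<in> Sigma Fs n t. Q t c}. \<Sum>j=1..n. if j \<le> colcount Fs n E t c then 1 else 0)"
      using \<open>t \<in> {..T}\<close> by (simp add: phi_lab_def coords_def indicator_sq)
    finally show "(\<Sum>(c, j)\<in>{c \<in> Sigma Fs n t. Q t c} \<times> {1..n}. (phi_lab Fs n T E (t, c, j))\<^sup>2)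
      = (\<Sum>c\<in>{c \<in> Sigma Fs n t. Q t c}. \<Sum>j=1..n. if j \<le> colcount Fs n E t c then 1 else 0)" .
  qed
  also have "\<dots> = (\<Sum>t\<le>T. \<Sum>c\<in>{c \<in> Sigma Fs n t. Q t c}. real (colcount Fs n E t c))"
  proof (intro sum.cong refl)
    fix t c
    have "colcount Fs n E t c \<le> card {..<n}"
      unfolding colcount_def by (rule card_mono) auto
    then have "colcount Fs n E t c \<le> n"
      by simp
    then have "{j \<in> {1..n}. j \<le> colcount Fs n E t c} = {1..colcount Fs n E t c}"
      by auto
    then show "(\<Sum>j=1..n. if j \<le> colcount Fs n E t c then 1 else 0) = real (colcount Fs n E t c)"
      by (simp add: sum.If_cases Int_def)
  qed
  also have "\<dots> = (\<Sum>t\<le>T. real (card {v. v < n \<and> Q t (wl Fs n E t v)}))"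
    using sum_colcount[OF assms] by (simp flip: of_nat_sum)
  finally show ?thesis .
qed

definition vertex_degree :: "(nat \<times> nat) set \<Rightarrow> nat \<Rightarrow> nat" where
  "vertex_degree E v = card {u. (v, u) \<in> E}"

fun colour_degree :: "wlcol \<Rightarrow> nat" where
  "colour_degree (Col0 _) = 0"
| "colour_degree (ColS (Col0 _) M) = size M"
| "colour_degree (ColS c _) = colour_degree c"

lemma colour_degree_wl:
  assumes "E \<in> graphs n" "0 < t"
  shows "colour_degree (wl Fs n E t v) = vertex_degree E v"
  using assms(2)
proof (induction t)
  case 0
  then show ?case by simp
next
  case (Suc t)
  have "finite {u. (v, u) \<in> E}"
    using assms(1) by (auto simp: graphs_def intro: finite_subset[of _ "{0..<n}"])
  then show ?case
    using Suc by (cases t) (simp_all add: vertex_degree_def)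
qed

lemma graph_iso_vertex_degree:
  assumes "E \<in> graphs n" "E' \<in> graphs n" "graph_iso n E E'"
  obtains f where "bij_betw f {0..<n} {0..<n}" "\<And>a. a < n \<Longrightarrow> vertex_degree E' (f a) = vertex_degree E a"
proof -
  obtain f where f: "bij_betw f {0..<n} {0..<n}"
    and edges: "\<forall>a<n. \<forall>b<n. (a, b) \<in> E \<longleftrightarrow> (f a, f b) \<in> E'"
    using assms(3) unfolding graph_iso_def by blast
  have "vertex_degree E' (f a) = vertex_degree E a" if "a < n" for a
  proof -
    have "{u. (f a, u) \<in> E'} = f ` {b. (a, b) \<in> E}"
    proof safe
      fix u assume "(f a, u) \<in> E'"
      then have "u \<in> f ` {0..<n}"
        using assms(2) f by (auto simp: graphs_def bij_betw_def)
      then show "u \<in> f ` {b. (a, b) \<in> E}"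
        using edges that \<open>(f a, u) \<in> E'\<close> by auto
    next
      fix b assume "(a, b) \<in> E"
      then show "(f a, f b) \<in> E'"
        using edges that assms(1) by (auto simp: graphs_def)
    qed
    moreover have "inj_on f {b. (a, b) \<in> E}"
      using f assms(1) unfolding bij_betw_def graphs_def by (auto intro: inj_on_subset)
    ultimately show ?thesis
      by (simp add: vertex_degree_def card_image)
  qed
  then show thesis
    using that f by blast
qed

lemma card_vertex_degree_graph_iso:
  assumes "E \<in> graphs n" "E' \<in> graphs n" "graph_iso n E E'"
  shows "card {v. v < n \<and> P (vertex_degree E' v)} = card {v. v < n \<and> P (vertex_degree E v)}"
proof -
  obtain f where f: "bij_betw f {0..<n} {0..<n}" and deg: "\<And>a. a < n \<Longrightarrow> vertex_degree E' (f a) = vertex_degree E a"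
    using graph_iso_vertex_degree[OF assms] by blast
  have "{v. v < n \<and> P (vertex_degree E' v)} = f ` {a. a < n \<and> P (vertex_degree E a)}"
  proof safe
    fix v assume "v < n" "P (vertex_degree E' v)"
    then obtain a where "a < n" "v = f a"
      using f unfolding bij_betw_def by (metis atLeast0LessThan imageE lessThan_iff)
    then show "v \<in> f ` {a. a < n \<and> P (vertex_degree E a)}"
      using deg \<open>P (vertex_degree E' v)\<close> by auto
  next
    fix a assume "a < n" "P (vertex_degree E a)"
    then show "f a < n" "P (vertex_degree E' (f a))"
      using f deg unfolding bij_betw_def by auto
  qed
  moreover have "inj_on f {a. a < n \<and> P (vertex_degree E a)}"
    using f unfolding bij_betw_def by (auto intro: inj_on_subset)
  ultimately show ?thesis
    by (simp add: card_image)
qed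

lemma sum_sq_phi_WLOA:
  assumes "X \<in> Gn n"
  shows "(\<Sum>i\<in>coords Fs n T. (phi_WLOA Fs n T X i)\<^sup>2) = real (T + 1) * real n"
  using sum_sq_phi_lab[of "SOME E. E \<in> X" n Fs T "\<lambda>_ _. True"] Gn_elementD[OF assms]
  by (auto simp: phi_WLOA_def)

section \<open>Classes of cliques\<close>

definition clique_graph :: "nat \<Rightarrow> (nat \<times> nat) set" where
  "clique_graph m = {(a, b). a \<le> m \<and> b \<le> m \<and> a \<noteq> b}"

definition clique_class :: "nat \<Rightarrow> nat \<Rightarrow> (nat \<times> nat) set set" where
  "clique_class n m = iso_rel n `` {clique_graph m}"

lemma clique_graph_in_graphs: "m < n \<Longrightarrow> clique_graph m \<in> graphs n"
  by (auto simp: clique_graph_def graphs_def sym_def irrefl_def)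

lemma vertex_degree_clique_graph: "vertex_degree (clique_graph m) a = (if a \<le> m then m else 0)"
proof -
  have "{u. (a, u) \<in> clique_graph m} = (if a \<le> m then {0..m} - {a} else {})"
    by (auto simp: clique_graph_def)
  then show ?thesis
    by (simp add: vertex_degree_def)
qed

lemma clique_class_in_Gn: "m < n \<Longrightarrow> clique_class n m \<in> Gn n"
  unfolding clique_class_def Gn_def by (rule quotientI) (rule clique_graph_in_graphs)

lemma clique_graph_in_clique_class: "m < n \<Longrightarrow> clique_graph m \<in> clique_class n m"
  by (simp add: clique_class_def iso_rel_def clique_graph_in_graphs graph_iso_refl)

lemma vertex_degree_in_clique_class:
  assumes "m < n" "E \<in> clique_class n m"
  shows "\<And>v. v < n \<Longrightarrow> vertex_degree E v = 0 \<or> vertex_degree E v = m"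
    and "0 < m \<Longrightarrow> card {v. v < n \<and> vertex_degree E v \<noteq> 0} = m + 1"
proof -
  have iso: "clique_graph m \<in> graphs n" "E \<in> graphs n" "graph_iso n (clique_graph m) E"
    using assms clique_graph_in_graphs by (auto simp: clique_class_def iso_rel_def)
  have "card {v. v < n \<and> vertex_degree E v \<notin> {0, m}} = 0"
    using card_vertex_degree_graph_iso[OF iso, of "\<lambda>k. k \<notin> {0, m}"] by (simp add: vertex_degree_clique_graph)
  then show "\<And>v. v < n \<Longrightarrow> vertex_degree E v = 0 \<or> vertex_degree E v = m"
    by auto
  assume "0 < m"
  then have "{v. v < n \<and> vertex_degree (clique_graph m) v \<noteq> 0} = {0..m}"
    using \<open>m < n\<close> by (auto simp: vertex_degree_clique_graph)
  then show "card {v. v < n \<and> vertex_degree E v \<noteq> 0} = m + 1"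
    using card_vertex_degree_graph_iso[OF iso, of "\<lambda>k. k \<noteq> 0"] by simp
qed

lemma inj_on_clique_class: "inj_on (clique_class n) {m. 0 < m \<and> m < n}"
proof (rule inj_onI)
  fix m m' assume m: "m \<in> {m. 0 < m \<and> m < n}" and m': "m' \<in> {m. 0 < m \<and> m < n}"
    and eq: "clique_class n m = clique_class n m'"
  have "clique_graph m' \<in> clique_class n m"
    using eq clique_graph_in_clique_class m' by simp
  then have "card {v. v < n \<and> vertex_degree (clique_graph m') v \<noteq> 0} = m + 1"
    using vertex_degree_in_clique_class(2) m by simp
  moreover have "card {v. v < n \<and> vertex_degree (clique_graph m') v \<noteq> 0} = m' + 1"
    using vertex_degree_in_clique_class(2) clique_graph_in_clique_class m' by simp
  ultimately show "m = m'"
    by simp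
qed

definition degree_coords :: "(nat \<times> (nat \<times> nat) set) set \<Rightarrow> nat \<Rightarrow> nat \<Rightarrow> (nat \<times> wlcol \<times> nat) set" where
  "degree_coords Fs n T = {(t, c, j) \<in> coords Fs n T. 0 < t \<and> colour_degree c \<noteq> 0}"

lemma phi_WLOA_clique_class_nonzero:
  assumes "m < n" "0 < t" "phi_WLOA Fs n T (clique_class n m) (t, c, j) \<noteq> 0"
  shows "colour_degree c = 0 \<or> colour_degree c = m"
proof -
  define E where "E = (SOME E. E \<in> clique_class n m)"
  have E: "E \<in> clique_class n m" "E \<in> graphs n"
    using Gn_elementD[OF clique_class_in_Gn[OF \<open>m < n\<close>]] unfolding E_def by auto
  have "0 < colcount Fs n E t c"
    using assms(3) unfolding phi_WLOA_def phi_lab_def E_def by (auto simp: coords_def split: if_split_asm)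
  then obtain v where "v < n" "wl Fs n E t v = c"
    unfolding colcount_def by (metis (mono_tags) card.empty empty_Collect_eq less_irrefl)
  then show ?thesis
    using colour_degree_wl[OF E(2) \<open>0 < t\<close>] vertex_degree_in_clique_class(1)[OF \<open>m < n\<close> E(1)]
    by metis
qed

lemma sum_sq_phi_WLOA_clique_class:
  assumes "0 < m" "m < n"
  shows "(\<Sum>i\<in>degree_coords Fs n T. (phi_WLOA Fs n T (clique_class n m) i)\<^sup>2) = real T * real (m + 1)"
proof -
  define E where "E = (SOME E. E \<in> clique_class n m)"
  have E: "E \<in> clique_class n m" "E \<in> graphs n"
    using Gn_elementD[OF clique_class_in_Gn[OF \<open>m < n\<close>]] unfolding E_def by auto
  have "card {v. v < n \<and> 0 < t \<and> colour_degree (wl Fs n E t v) \<noteq> 0} = (if 0 < t then m + 1 else 0)" for t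
    using colour_degree_wl[OF E(2)] vertex_degree_in_clique_class(2)[OF \<open>m < n\<close> E(1) \<open>0 < m\<close>]
    by (cases "0 < t") simp_all
  then have "(\<Sum>i\<in>degree_coords Fs n T. (phi_WLOA Fs n T (clique_class n m) i)\<^sup>2)
      = (\<Sum>t\<le>T. real (if 0 < t then m + 1 else 0))"
    using sum_sq_phi_lab[OF E(2), of Fs T "\<lambda>t c. 0 < t \<and> colour_degree c \<noteq> 0"]
    by (simp add: degree_coords_def phi_WLOA_def E_def)
  also have "\<dots> = real T * real (m + 1)"
    by (induction T) (simp_all add: algebra_simps)
  finally show ?thesis .
qed

lemma clique_classes_margin:
  assumes "0 < d" "2 * d \<le> n"
    and AB: "A \<subseteq> clique_class n ` {n - d..<n}" "B \<subseteq> clique_class n ` {n - d..<n}" "A \<inter> B = {}"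
    and weights: "\<forall>x\<in>A. 0 \<le> a x" "sum a A = 1" "\<forall>x\<in>B. 0 \<le> b x" "sum b B = 1"
  shows "2 * real T * real n / real d
    \<le> (\<Sum>i\<in>coords Fs n T. ((\<Sum>x\<in>A. a x * phi_WLOA Fs n T x i) - (\<Sum>x\<in>B. b x * phi_WLOA Fs n T x i))\<^sup>2)"
proof -
  let ?S = "clique_class n ` {n - d..<n}"
  have range: "0 < m" "m < n" "real n / 2 \<le> real m" if "m \<in> {n - d..<n}" for m
    using that assms(1,2) by auto
  have "4 * (real T * real n / 2) / real d
    \<le> (\<Sum>i\<in>coords Fs n T. ((\<Sum>x\<in>A. a x * phi_WLOA Fs n T x i) - (\<Sum>x\<in>B. b x * phi_WLOA Fs n T x i))\<^sup>2)"
  proof (rule convex_hull_sq_dist_ge_if_orthogonal[OF finite_coords _ _ _ _ _ _ AB weights])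
    show "degree_coords Fs n T \<subseteq> coords Fs n T"
      by (auto simp: degree_coords_def)
    show "finite ?S" "card ?S \<le> d" "0 \<le> real T * real n / 2"
      using card_image_le[of "{n - d..<n}" "clique_class n"] by auto
  next
    fix x y i assume "x \<in> ?S" "y \<in> ?S" "x \<noteq> y" "i \<in> degree_coords Fs n T"
    then obtain m m' t c j where "x = clique_class n m" "y = clique_class n m'" "m \<in> {n - d..<n}"
      "m' \<in> {n - d..<n}" "i = (t, c, j)" "0 < t" "colour_degree c \<noteq> 0"
      unfolding degree_coords_def by blast
    moreover from this have "m \<noteq> m'"
      using \<open>x \<noteq> y\<close> by blast
    ultimately show "phi_WLOA Fs n T x i * phi_WLOA Fs n T y i = 0"
      using phi_WLOA_clique_class_nonzero[of m n t] phi_WLOA_clique_class_nonzero[of m' n t] range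
      by (metis mult_eq_0_iff)
  next
    fix x assume "x \<in> ?S"
    then obtain m where "x = clique_class n m" "m \<in> {n - d..<n}"
      by blast
    moreover have "real T * real n \<le> real T * (2 * real (m + 1))"
      using range(3)[OF \<open>m \<in> {n - d..<n}\<close>] by (intro mult_left_mono) auto
    ultimately show "real T * real n / 2 \<le> (\<Sum>i\<in>degree_coords Fs n T. (phi_WLOA Fs n T x i)\<^sup>2)"
      using sum_sq_phi_WLOA_clique_class range by (simp add: algebra_simps)
  qed
  then show ?thesis
    by simp
qed

lemma card_le_vcdim_scaled_WLOA:
  assumes "0 < d" "2 * d \<le> n" "0 < lam" "0 < \<kappa>"
    and emb: "\<And>X. X \<in> Gn n \<Longrightarrow> emb X = (\<lambda>i. \<kappa> * phi_WLOA Fs n T X i)"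
    and margin: "2 * lam\<^sup>2 * real d \<le> \<kappa>\<^sup>2 * real T * real n"
  shows "d \<le> vcdim (Gn n) (Hmargin (Gn n) (coords Fs n T) (\<kappa> * sqrt (real (T + 1) * real n)) lam {emb})"
proof -
  let ?S = "clique_class n ` {n - d..<n}"
  have S_Gn: "?S \<subseteq> Gn n"
    using clique_class_in_Gn by auto
  have "{n - d..<n} \<subseteq> {m. 0 < m \<and> m < n}"
    using assms(1,2) by auto
  then have "card ?S = d"
    using inj_on_subset[OF inj_on_clique_class] assms(2) by (simp add: card_image)
  moreover have "shatters (Hmargin (Gn n) (coords Fs n T) (\<kappa> * sqrt (real (T + 1) * real n)) lam {emb}) ?S"
  proof (rule shatters_Hmargin_if_margin[OF S_Gn \<open>0 < lam\<close>])
    fix X assume "X \<in> ?S"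
    then have "(\<Sum>i\<in>coords Fs n T. (emb X i)\<^sup>2) = \<kappa>\<^sup>2 * (real (T + 1) * real n)"
      using S_Gn emb sum_sq_phi_WLOA
      by (auto simp: power_mult_distrib sum_distrib_left[symmetric])
    then show "enorm (coords Fs n T) (emb X) \<le> \<kappa> * sqrt (real (T + 1) * real n)"
      using \<open>0 < \<kappa>\<close> by (simp add: enorm_le_iff power_mult_distrib)
  next
    fix A B :: "(nat \<times> nat) set set set" and a b :: "(nat \<times> nat) set set \<Rightarrow> real"
    assume AB: "A \<subseteq> ?S" "B \<subseteq> ?S" "A \<inter> B = {}"
      and weights: "\<forall>x\<in>A. 0 \<le> a x" "sum a A = 1" "\<forall>x\<in>B. 0 \<le> b x" "sum b B = 1"
    have scaled: "(\<Sum>x\<in>A. a x * emb x i) - (\<Sum>x\<in>B. b x * emb x i)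
      = \<kappa> * ((\<Sum>x\<in>A. a x * phi_WLOA Fs n T x i) - (\<Sum>x\<in>B. b x * phi_WLOA Fs n T x i))" for i
      using AB S_Gn emb by (simp add: right_diff_distrib sum_distrib_left subset_iff algebra_simps)
    have "(2 * lam)\<^sup>2 \<le> \<kappa>\<^sup>2 * (2 * real T * real n / real d)"
      using margin \<open>0 < d\<close> by (simp add: field_simps power2_eq_square)
    also have "\<dots> \<le> \<kappa>\<^sup>2 * (\<Sum>i\<in>coords Fs n T.
        ((\<Sum>x\<in>A. a x * phi_WLOA Fs n T x i) - (\<Sum>x\<in>B. b x * phi_WLOA Fs n T x i))\<^sup>2)"
      using clique_classes_margin[OF assms(1,2) AB weights, of T Fs] by (intro mult_left_mono) simp_all
    also have "\<dots> = (\<Sum>i\<in>coords Fs n T. ((\<Sum>x\<in>A. a x * emb x i) - (\<Sum>x\<in>B. b x * emb x i))\<^sup>2)"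
      unfolding scaled by (simp add: power_mult_distrib sum_distrib_left)
    finally show "2 * lam \<le> enorm (coords Fs n T) (\<lambda>i. (\<Sum>x\<in>A. a x * emb x i) - (\<Sum>x\<in>B. b x * emb x i))"
      using \<open>0 < lam\<close> by (simp add: le_enorm_iff)
  qed
  ultimately show ?thesis
    using card_le_vcdim[OF finite_Gn S_Gn] by metis
qed

lemma phi_WLOA_norm_eq:
  assumes "X \<in> Gn n"
  shows "phi_WLOA_norm Fs n T X = (\<lambda>i. 1 / sqrt (real (T + 1) * real n) * phi_WLOA Fs n T X i)"
  using sum_sq_phi_WLOA[OF assms] by (simp add: phi_WLOA_norm_def enorm_def)

lemma nat_floor_bounds:
  assumes "0 \<le> y"
  shows "y - 1 \<le> real (nat \<lfloor>y\<rfloor>)" "real (nat \<lfloor>y\<rfloor>) \<le> y"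
  using assms of_nat_floor[OF assms] by linarith+

lemma vcdim_WLOA_bounds:
  assumes "0 < T" "0 < lam"
    and "real (T + 1) * real n / lam\<^sup>2 \<le> real n" "8 \<le> real (T + 1) * real n / lam\<^sup>2"
  defines "r \<equiv> sqrt (real (T + 1) * real n)"
  shows "1 / 8 * (r\<^sup>2 / lam\<^sup>2) \<le> real (vcdim (Gn n) (Hmargin (Gn n) (coords Fs n T) r lam (E_WLOA Fs n T)))"
    and "real (vcdim (Gn n) (Hmargin (Gn n) (coords Fs n T) r lam (E_WLOA Fs n T))) \<le> 3 * (r\<^sup>2 / lam\<^sup>2)"
proof -
  define x where "x = real (T + 1) * real n / lam\<^sup>2"
  have x: "r\<^sup>2 / lam\<^sup>2 = x" "8 \<le> x" "x \<le> real n"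
    using assms(3,4) by (simp_all add: r_def x_def)
  define d where "d = nat \<lfloor>x / 4\<rfloor>"
  have d: "x / 4 - 1 \<le> real d" "real d \<le> x / 4"
    using nat_floor_bounds[of "x / 4"] \<open>8 \<le> x\<close> unfolding d_def by auto
  have "lam\<^sup>2 * real d \<le> lam\<^sup>2 * (x / 4)"
    using d(2) by (intro mult_left_mono) auto
  moreover have "lam\<^sup>2 * (x / 4) = real (T + 1) * real n / 4"
    using \<open>0 < lam\<close> by (simp add: x_def)
  moreover have "real (T + 1) * real n \<le> 2 * real T * real n"
    using \<open>0 < T\<close> by (intro mult_right_mono) auto
  ultimately have "2 * (lam\<^sup>2 * real d) \<le> real T * real n"
    by linarith
  moreover have "0 < d" "2 * d \<le> n"
    using d x by linarith+
  ultimately have "d \<le> vcdim (Gn n) (Hmargin (Gn n) (coords Fs n T) r lam {phi_WLOA Fs n T})"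
    using card_le_vcdim_scaled_WLOA[of d n lam 1 "phi_WLOA Fs n T" Fs T] \<open>0 < lam\<close>
    unfolding r_def by simp
  then show "1 / 8 * (r\<^sup>2 / lam\<^sup>2) \<le> real (vcdim (Gn n) (Hmargin (Gn n) (coords Fs n T) r lam (E_WLOA Fs n T)))"
    using d x unfolding E_WLOA_def by linarith
  have "real (vcdim (Gn n) (Hmargin (Gn n) (coords Fs n T) r lam (E_WLOA Fs n T))) \<le> 2 * x + 1"
    using vcdim_Hmargin_le[OF finite_Gn[of n] \<open>0 < lam\<close>, where I = "coords Fs n T" and r = r and emb = "phi_WLOA Fs n T"]
    x(1) unfolding E_WLOA_def by simp
  then show "real (vcdim (Gn n) (Hmargin (Gn n) (coords Fs n T) r lam (E_WLOA Fs n T))) \<le> 3 * (r\<^sup>2 / lam\<^sup>2)"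
    using x by linarith
qed

lemma vcdim_WLOA_norm_bounds:
  assumes "0 < T" "0 < lam"
    and "real T / real (T + 1) / lam\<^sup>2 \<le> real n" "16 \<le> 1 / lam\<^sup>2"
  shows "1 / 16 * (1 / lam\<^sup>2) \<le> real (vcdim (Gn n) (Hmargin (Gn n) (coords Fs n T) 1 lam (E_WLOA_norm Fs n T)))"
    and "real (vcdim (Gn n) (Hmargin (Gn n) (coords Fs n T) 1 lam (E_WLOA_norm Fs n T))) \<le> 3 * (1 / lam\<^sup>2)"
proof -
  define y where "y = 1 / lam\<^sup>2"
  define d where "d = nat \<lfloor>y / 8\<rfloor>"
  have d: "y / 8 - 1 \<le> real d" "real d \<le> y / 8"
    using nat_floor_bounds[of "y / 8"] \<open>16 \<le> 1 / lam\<^sup>2\<close> unfolding d_def y_def by auto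
  have "1 / 2 \<le> real T / real (T + 1)"
    using \<open>0 < T\<close> by (simp add: field_simps)
  then have "1 / 2 * y \<le> real T / real (T + 1) * y"
    using \<open>16 \<le> 1 / lam\<^sup>2\<close> unfolding y_def by (intro mult_right_mono) auto
  then have "y / 2 \<le> real n"
    using assms(3) unfolding y_def by simp
  moreover have "16 \<le> y"
    using assms(4) by (simp add: y_def)
  ultimately have "1 \<le> real d" "2 * real d \<le> real n"
    using d by linarith+
  then have "0 < d" "2 * d \<le> n"
    by simp_all
  define \<kappa> where "\<kappa> = 1 / sqrt (real (T + 1) * real n)"
  have "0 < \<kappa>"
    using \<open>2 * d \<le> n\<close> \<open>0 < d\<close> by (simp add: \<kappa>_def)
  have "2 * lam\<^sup>2 * real d \<le> 2 * lam\<^sup>2 * (y / 8)"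
    using d(2) by (intro mult_left_mono) auto
  also have "\<dots> = 1 / 4"
    using \<open>0 < lam\<close> unfolding y_def by simp
  also have "\<dots> \<le> real T / real (T + 1)"
    using \<open>1 / 2 \<le> real T / real (T + 1)\<close> by simp
  also have "\<dots> = \<kappa>\<^sup>2 * real T * real n"
    using \<open>0 < d\<close> \<open>2 * d \<le> n\<close> by (simp add: \<kappa>_def power_divide)
  finally have "d \<le> vcdim (Gn n) (Hmargin (Gn n) (coords Fs n T) 1 lam {phi_WLOA_norm Fs n T})"
    using card_le_vcdim_scaled_WLOA[of d n lam \<kappa> "phi_WLOA_norm Fs n T" Fs T] phi_WLOA_norm_eq
      \<open>0 < d\<close> \<open>2 * d \<le> n\<close> \<open>0 < lam\<close> \<open>0 < \<kappa>\<close>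
    by (simp add: \<kappa>_def)
  then show "1 / 16 * (1 / lam\<^sup>2) \<le> real (vcdim (Gn n) (Hmargin (Gn n) (coords Fs n T) 1 lam (E_WLOA_norm Fs n T)))"
    using d \<open>16 \<le> 1 / lam\<^sup>2\<close> unfolding E_WLOA_norm_def y_def by linarith
  have "real (vcdim (Gn n) (Hmargin (Gn n) (coords Fs n T) 1 lam (E_WLOA_norm Fs n T))) \<le> 2 * y + 1"
    using vcdim_Hmargin_le[OF finite_Gn[of n] \<open>0 < lam\<close>, where I = "coords Fs n T" and r = 1 and emb = "phi_WLOA_norm Fs n T"]
    unfolding E_WLOA_norm_def y_def by simp
  then show "real (vcdim (Gn n) (Hmargin (Gn n) (coords Fs n T) 1 lam (E_WLOA_norm Fs n T))) \<le> 3 * (1 / lam\<^sup>2)"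
    using \<open>16 \<le> y\<close> unfolding y_def by linarith
qed

theorem corollary7:
  fixes Fs :: "(nat \<times> (nat \<times> nat) set) set"
  assumes "finite Fs"
    and "\<forall>F\<in>Fs. snd F \<in> graphs (fst F)"
  shows
   "(\<exists>c C M. c > 0 \<and> C > 0 \<and>
      (\<forall>(T::nat) (lam::real) (n::nat). T > 0 \<longrightarrow> lam > 0 \<longrightarrow>
        (let r = sqrt (real (T + 1) * real n) in
          real n \<ge> r\<^sup>2 / lam\<^sup>2 \<longrightarrow> r\<^sup>2 / lam\<^sup>2 \<ge> M \<longrightarrow>
            c * (r\<^sup>2 / lam\<^sup>2) \<le> real (vcdim (Gn n)
                 (Hmargin (Gn n) (coords Fs n T) r lam (E_WLOA Fs n T))) \<and>
            real (vcdim (Gn n) (Hmargin (Gn n) (coords Fs n T) r lam (E_WLOA Fs n T)))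
                 \<le> C * (r\<^sup>2 / lam\<^sup>2))))
    \<and>
    (\<exists>c C M. c > 0 \<and> C > 0 \<and>
      (\<forall>(T::nat) (lam::real) (n::nat). T > 0 \<longrightarrow> lam > 0 \<longrightarrow>
        (let r = sqrt (real T / real (T + 1)) in
          real n \<ge> r\<^sup>2 / lam\<^sup>2 \<longrightarrow> 1 / lam\<^sup>2 \<ge> M \<longrightarrow>
            c * (1 / lam\<^sup>2) \<le> real (vcdim (Gn n)
                 (Hmargin (Gn n) (coords Fs n T) 1 lam (E_WLOA_norm Fs n T))) \<and>
            real (vcdim (Gn n) (Hmargin (Gn n) (coords Fs n T) 1 lam (E_WLOA_norm Fs n T)))
                 \<le> C * (1 / lam\<^sup>2))))"
proof (intro conjI, goal_cases)
  case 1
  show ?case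
    by (rule exI[of _ "1 / 8"], rule exI[of _ 3], rule exI[of _ 8])
      (use vcdim_WLOA_bounds in \<open>auto simp: Let_def\<close>)
next
  case 2
  show ?case
    by (rule exI[of _ "1 / 16"], rule exI[of _ 3], rule exI[of _ 16])
      (use vcdim_WLOA_norm_bounds in \<open>auto simp: Let_def\<close>)
qed

end
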